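(* Let $\beta\in(0,2]$, $N>0$, and let $B$ be a Young function with $B(t)=Ne^{t^\beta}$ for all $t>t_0$ (some $t_0>0$), $B(t)=\int_0^tb$ with $b$ non-decreasing and left-continuous. For $t>0$ let $\lambda_t>0$ satisfy $\int_0^tB(b^{-1}(\lambda_te^{\tau^2/2}))e^{-\tau^2/2}\,d\tau=\sqrt{2\pi}$. Then $$\lim_{t\to\infty}\frac{\lambda_t}{c_\beta\,t^{1-\frac2\beta}}=1\ \text{ if }\beta\in(0,2),\qquad \lim_{t\to\infty}\frac{\lambda_t\log t}{c_2}=1\ \text{ if }\beta=2,$$ where $c_\beta=2^{\frac1\beta-\frac12}\sqrt\pi\,(2-\beta)$ for $\beta\in(0,2)$ and $c_2=2\sqrt\pi$.
   Context: A Young function is a convex $B\colon[0,\infty)\to[0,\infty]$ with $B(0)=0$; $b^{-1}(s)=\inf\{r\ge0:b(r)\ge s\}$ is the left-continuous generalized inverse of $b$. *)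

theory Defs
  imports "HOL-Analysis.Analysis"
begin

definition young_function :: "(real \<Rightarrow> real) \<Rightarrow> bool" where
  "young_function B \<longleftrightarrow> B 0 = 0 \<and> (\<forall>t\<ge>0. B t \<ge> 0) \<and> convex_on {0..} B"

definition gen_inv :: "(real \<Rightarrow> real) \<Rightarrow> real \<Rightarrow> real" where
  "gen_inv b s = Inf {r. r \<ge> 0 \<and> b r \<ge> s}"

definition c_beta :: "real \<Rightarrow> real" where
  "c_beta \<beta> = (if \<beta> = 2 then 2 * sqrt pi
               else 2 powr (1/\<beta> - 1/2) * sqrt pi * (2 - \<beta>))"

end

theory Submission
  imports Defs "HOL-Real_Asymp.Real_Asymp"
begin

text \<open>
  Write \<rho> for the generalized inverse of b. Beyond t0 the inverse is exact, b(\<rho>(s)) = s,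
  and B(x) = N exp(x^\<beta>) gives B(\<rho>(s)) = s \<rho>(s)^(1-\<beta>)/\<beta> with \<rho>(s)^\<beta> ~ ln s.
  For s = \<Lambda> exp(\<tau>^2/2) the integrand is therefore asymptotic to the profile
  (\<Lambda>/\<beta>) (\<tau>^2/2)^((1-\<beta>)/\<beta>), uniformly in \<Lambda> \<le> 1 once \<tau>^2 dominates 1 - ln \<Lambda>,
  while below a cutoff m it is at most \<Lambda> (R + m^(2/\<beta>)). Comparing the normalisation
  sqrt(2\<pi>) with the explicit integral of the profile over [m, t] at the scale \<theta> D(t), where
  D(t) = c_\<beta> t^(1-2/\<beta>) resp. c_2 / ln t, shows that eventually \<theta> D(t) \<le> \<lambda>_t for \<theta> < 1
  and \<lambda>_t \<le> \<theta> D(t) for \<theta> > 1. The cutoffs m = t^\<gamma> resp. (ln t)^(1/4) are small enough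
  for [0, m] to be negligible and large enough for the profile approximation on [m, t].
\<close>

lemma young_function_mono:
  assumes "young_function B" "0 \<le> x" "x \<le> y"
  shows "B x \<le> B y"
proof (cases "y = 0")
  case True
  then show ?thesis using assms by simp
next
  case False
  with assms have y: "y > 0" by simp
  have B0: "B 0 = 0" and Bnn: "B y \<ge> 0" and conv: "convex_on {0..} B"
    using assms y unfolding young_function_def by auto
  have "B ((1 - x/y) *\<^sub>R 0 + (x/y) *\<^sub>R y) \<le> (1 - x/y) * B 0 + (x/y) * B y"
    by (rule convex_onD[OF conv]) (use assms y in auto)
  also have "\<dots> = (x/y) * B y" using B0 by simp
  also have "\<dots> \<le> B y" using assms y Bnn by (intro mult_left_le_one_le) auto
  finally show ?thesis using y by simp
qed

lemma integral_increment_bounds: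
  fixes b B :: "real \<Rightarrow> real"
  assumes int: "\<And>t. t \<ge> 0 \<Longrightarrow> (b has_integral B t) {0..t}"
    and mono: "mono_on {0..} b" and xy: "0 \<le> x" "x \<le> y"
  shows "(y - x) * b x \<le> B y - B x" "B y - B x \<le> (y - x) * b y"
proof -
  have "b integrable_on {0..y}" using int[of y] xy by auto
  then have ixy: "b integrable_on {x..y}" by (rule integrable_subinterval_real) (use xy in auto)
  have "integral {0..x} b + integral {x..y} b = integral {0..y} b"
    by (rule Henstock_Kurzweil_Integration.integral_combine)
      (use xy \<open>b integrable_on {0..y}\<close> in auto)
  then have incr: "B y - B x = integral {x..y} b"
    using int[of x] int[of y] xy by (simp add: integral_unique)
  have "integral {x..y} (\<lambda>_. b x) \<le> integral {x..y} b"
    by (rule integral_le) (use ixy mono xy in \<open>auto simp: mono_on_def\<close>)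
  then show "(y - x) * b x \<le> B y - B x" using incr xy by simp
  have "integral {x..y} b \<le> integral {x..y} (\<lambda>_. b y)"
    by (rule integral_le) (use ixy mono xy in \<open>auto simp: mono_on_def\<close>)
  then show "B y - B x \<le> (y - x) * b y" using incr xy by simp
qed

lemma subgradient_eq_derivative:
  fixes f :: "real \<Rightarrow> real"
  assumes f: "(f has_real_derivative D) (at x)"
    and sub: "eventually (\<lambda>y. (y - x) * c \<le> f y - f x) (at x)"
  shows "c = D"
proof -
  let ?Q = "\<lambda>y. (f y - f x) / (y - x)"
  have Q: "(?Q \<longlongrightarrow> D) (at x)" using f by (simp add: has_field_derivative_iff)
  have "c \<le> D"
  proof (rule tendsto_lowerbound)
    show "(?Q \<longlongrightarrow> D) (at_right x)" using Q by (simp add: filterlim_at_split)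
    have "eventually (\<lambda>y. y > x) (at_right x)" by (simp add: eventually_at_filter)
    moreover have "eventually (\<lambda>y. (y - x) * c \<le> f y - f x) (at_right x)"
      using sub by (simp add: eventually_at_split)
    ultimately show "eventually (\<lambda>y. c \<le> ?Q y) (at_right x)"
      by eventually_elim (simp add: pos_le_divide_eq mult.commute)
  qed simp
  moreover have "D \<le> c"
  proof (rule tendsto_upperbound)
    show "(?Q \<longlongrightarrow> D) (at_left x)" using Q by (simp add: filterlim_at_split)
    have "eventually (\<lambda>y. y < x) (at_left x)" by (simp add: eventually_at_filter)
    moreover have "eventually (\<lambda>y. (y - x) * c \<le> f y - f x) (at_left x)"
      using sub by (simp add: eventually_at_split)
    ultimately show "eventually (\<lambda>y. ?Q y \<le> c) (at_left x)"
      by eventually_elim (simp add: neg_divide_le_eq mult.commute)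
  qed simp
  ultimately show ?thesis by simp
qed

lemma bdd_below_gen_inv_set: "bdd_below {r. 0 \<le> r \<and> s \<le> b r}"
  by (rule bdd_belowI[of _ 0]) simp

lemma gen_inv_le: "0 \<le> x \<Longrightarrow> s \<le> b x \<Longrightarrow> gen_inv b s \<le> x"
  unfolding gen_inv_def by (rule cInf_lower[OF _ bdd_below_gen_inv_set]) simp

lemma gen_inv_nonneg: "\<exists>x\<ge>0. s \<le> b x \<Longrightarrow> 0 \<le> gen_inv b s"
  unfolding gen_inv_def by (rule cInf_greatest) auto

lemma less_gen_inv_imp_less: "0 \<le> y \<Longrightarrow> y < gen_inv b s \<Longrightarrow> b y < s"
  using gen_inv_le[of y s b] by force

lemma gen_inv_less_imp_ge:
  assumes "mono_on {0..} b" "\<exists>x\<ge>0. s \<le> b x" "gen_inv b s < x"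
  shows "s \<le> b x"
proof -
  let ?S = "{r. 0 \<le> r \<and> s \<le> b r}"
  have "?S \<noteq> {}" using assms(2) by auto
  then obtain y where "y \<in> ?S" "y < x"
    using assms(3) cInf_less_iff[OF _ bdd_below_gen_inv_set] unfolding gen_inv_def by blast
  then have "b y \<le> b x" using assms(1) by (auto intro: mono_onD)
  with \<open>y \<in> ?S\<close> show ?thesis by simp
qed

lemma le_gen_inv:
  assumes "mono_on {0..} b" "\<exists>x\<ge>0. s \<le> b x" "0 \<le> y" "b y < s"
  shows "y \<le> gen_inv b s"
  using gen_inv_less_imp_ge[OF assms(1,2), of y] assms(4) by (meson not_le)

lemma gen_inv_mono:
  assumes "\<exists>x\<ge>0. s2 \<le> b x" "s1 \<le> s2"
  shows "gen_inv b s1 \<le> gen_inv b s2"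
  unfolding gen_inv_def
proof (rule cInf_superset_mono[OF _ bdd_below_gen_inv_set])
  show "{r. 0 \<le> r \<and> s2 \<le> b r} \<noteq> {}" using assms(1) by auto
  show "{r. 0 \<le> r \<and> s2 \<le> b r} \<subseteq> {r. 0 \<le> r \<and> s1 \<le> b r}" using assms(2) by auto
qed

lemma b_gen_inv_le:
  assumes r: "gen_inv b s > 0" and cont: "continuous (at_left (gen_inv b s)) b"
  shows "b (gen_inv b s) \<le> s"
proof (rule tendsto_upperbound)
  show "(b \<longlongrightarrow> b (gen_inv b s)) (at_left (gen_inv b s))"
    using cont by (simp add: continuous_within)
  show "eventually (\<lambda>y. b y \<le> s) (at_left (gen_inv b s))"
    using eventually_at_left_real[OF r]
    by eventually_elim (simp add: less_gen_inv_imp_less less_imp_le)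
qed simp

lemma b_gen_inv_eq:
  assumes mono: "mono_on {0..} b" and ex: "\<exists>x\<ge>0. s \<le> b x"
    and r: "gen_inv b s > 0" and cont: "isCont b (gen_inv b s)"
  shows "b (gen_inv b s) = s"
proof (rule antisym)
  show "b (gen_inv b s) \<le> s"
    using b_gen_inv_le[OF r] cont by (simp add: continuous_at_imp_continuous_within)
  show "s \<le> b (gen_inv b s)"
  proof (rule tendsto_lowerbound)
    show "(b \<longlongrightarrow> b (gen_inv b s)) (at_right (gen_inv b s))"
      using cont by (simp add: isCont_def filterlim_at_split)
    have "eventually (\<lambda>y. gen_inv b s < y) (at_right (gen_inv b s))"
      by (simp add: eventually_at_filter)
    then show "eventually (\<lambda>y. s \<le> b y) (at_right (gen_inv b s))"
      by eventually_elim (rule gen_inv_less_imp_ge[OF mono ex])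
  qed simp
qed

lemma gen_inv_at_top:
  assumes mono: "mono_on {0..} b" and ex: "\<And>s. \<exists>x\<ge>0. s \<le> b x"
  shows "filterlim (gen_inv b) at_top at_top"
  unfolding filterlim_at_top_ge[where c = 0]
proof (intro allI impI)
  fix Z :: real assume "Z \<ge> 0"
  have "eventually (\<lambda>s. b Z < s) at_top" by (rule eventually_gt_at_top)
  then show "eventually (\<lambda>s. Z \<le> gen_inv b s) at_top"
    by eventually_elim (rule le_gen_inv[OF mono ex \<open>Z \<ge> 0\<close>])
qed

lemma ln_scaled_exp_bounds:
  fixes \<Lambda> \<epsilon> \<tau> :: real
  assumes \<Lambda>: "0 < \<Lambda>" "\<Lambda> \<le> 1" and \<epsilon>: "0 < \<epsilon>" and \<tau>: "2 / \<epsilon> * (1 - ln \<Lambda>) \<le> \<tau>\<^sup>2"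
  shows "(1 - \<epsilon>) * (\<tau>\<^sup>2 / 2) \<le> ln (\<Lambda> * exp (\<tau>\<^sup>2 / 2))" "ln (\<Lambda> * exp (\<tau>\<^sup>2 / 2)) \<le> \<tau>\<^sup>2 / 2"
proof -
  have ln: "ln (\<Lambda> * exp (\<tau>\<^sup>2 / 2)) = \<tau>\<^sup>2 / 2 + ln \<Lambda>" using \<Lambda> by (simp add: ln_mult)
  have "2 / \<epsilon> * (- ln \<Lambda>) \<le> 2 / \<epsilon> * (1 - ln \<Lambda>)" using \<epsilon> by (intro mult_left_mono) auto
  then have "2 / \<epsilon> * (- ln \<Lambda>) \<le> \<tau>\<^sup>2" using \<tau> by linarith
  then have "- ln \<Lambda> \<le> \<epsilon> * (\<tau>\<^sup>2 / 2)" using \<epsilon> by (simp add: field_simps)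
  then show "(1 - \<epsilon>) * (\<tau>\<^sup>2 / 2) \<le> ln (\<Lambda> * exp (\<tau>\<^sup>2 / 2))" unfolding ln by (simp add: algebra_simps)
  show "ln (\<Lambda> * exp (\<tau>\<^sup>2 / 2)) \<le> \<tau>\<^sup>2 / 2" unfolding ln using \<Lambda> by simp
qed

lemma tendsto_ratio_1I:
  fixes f g :: "'a \<Rightarrow> real"
  assumes g: "eventually (\<lambda>x. 0 < g x) F"
    and le: "\<And>\<theta>. 1 < \<theta> \<Longrightarrow> eventually (\<lambda>x. f x \<le> \<theta> * g x) F"
    and ge: "\<And>\<theta>. 0 < \<theta> \<Longrightarrow> \<theta> < 1 \<Longrightarrow> eventually (\<lambda>x. \<theta> * g x \<le> f x) F"
  shows "((\<lambda>x. f x / g x) \<longlongrightarrow> 1) F"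
proof (rule order_tendstoI)
  fix a :: real assume "a < 1"
  define \<theta> where "\<theta> = (max a 0 + 1) / 2"
  have \<theta>: "0 < \<theta>" "\<theta> < 1" "a < \<theta>" using \<open>a < 1\<close> unfolding \<theta>_def by auto
  from g ge[OF \<theta>(1,2)] show "eventually (\<lambda>x. a < f x / g x) F"
  proof eventually_elim
    case (elim x)
    then have "\<theta> \<le> f x / g x" by (simp add: pos_le_divide_eq)
    with \<theta>(3) show ?case by linarith
  qed
next
  fix a :: real assume "1 < a"
  define \<theta> where "\<theta> = (1 + a) / 2"
  have \<theta>: "1 < \<theta>" "\<theta> < a" using \<open>1 < a\<close> unfolding \<theta>_def by auto
  from g le[OF \<theta>(1)] show "eventually (\<lambda>x. f x / g x < a) F"
  proof eventually_elim
    case (elim x)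
    then have "f x / g x \<le> \<theta>" by (simp add: pos_divide_le_eq)
    with \<theta>(2) show ?case by linarith
  qed
qed

lemma has_real_derivative_half_square_powr:
  fixes e \<tau> :: real
  assumes e: "2 * e + 1 \<noteq> 0" and \<tau>: "0 < \<tau>"
  shows "((\<lambda>\<tau>. 2 powr (- e) * \<tau> powr (2 * e + 1) / (2 * e + 1)) has_real_derivative (\<tau>\<^sup>2 / 2) powr e) (at \<tau>)"
proof -
  have "(\<tau>\<^sup>2 / 2) powr e = 2 powr (- e) * ((2 * e + 1) * \<tau> powr (2 * e + 1 - 1)) / (2 * e + 1)"
    using \<tau> e by (simp add: powr_divide powr_powr powr_minus_divide flip: powr_numeral)
  then show ?thesis using \<tau> by (auto intro!: derivative_eq_intros)
qed

lemma has_real_derivative_half_square_powr_minus_half: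
  fixes \<tau> :: real
  assumes \<tau>: "0 < \<tau>"
  shows "((\<lambda>\<tau>. sqrt 2 * ln \<tau>) has_real_derivative (\<tau>\<^sup>2 / 2) powr (- 1 / 2)) (at \<tau>)"
proof -
  have "(\<tau>\<^sup>2 / 2) powr (- 1 / 2) = sqrt 2 * (1 / \<tau>)"
    using \<tau> by (simp add: powr_minus_divide powr_half_sqrt real_sqrt_divide)
  then show ?thesis using \<tau> by (auto intro!: derivative_eq_intros)
qed

lemma c_beta_subcritical:
  fixes \<beta> :: real
  assumes \<beta>: "0 < \<beta>" "\<beta> < 2"
  shows "c_beta \<beta> * 2 powr (- ((1 - \<beta>) / \<beta>)) / (\<beta> * (2 / \<beta> - 1)) = sqrt (2 * pi)"
proof -
  have "2 powr (1 / \<beta> - 1 / 2) * 2 powr (- ((1 - \<beta>) / \<beta>)) = (2::real) powr (1 / 2)"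
    using \<beta> by (simp add: field_simps flip: powr_add)
  moreover have "\<beta> * (2 / \<beta> - 1) = 2 - \<beta>" using \<beta> by (simp add: field_simps)
  ultimately show ?thesis
    using \<beta> by (simp add: c_beta_def powr_half_sqrt real_sqrt_mult field_simps)
qed

lemma cutoff_remainder_tendsto_0:
  fixes \<beta> \<gamma> c R :: real
  assumes \<beta>: "0 < \<beta>" and \<gamma>: "0 < \<gamma>" "\<gamma> * (2 / \<beta> + 1) < 2 / \<beta> - 1"
  shows "((\<lambda>t. c * t powr (1 - 2 / \<beta>) * (R + (t powr \<gamma>) powr (2 / \<beta>)) * t powr \<gamma>) \<longlongrightarrow> 0) at_top"
proof -
  define a1 where "a1 = 1 - 2 / \<beta> + \<gamma>"
  define a2 where "a2 = 1 - 2 / \<beta> + \<gamma> * (2 / \<beta>) + \<gamma>"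
  have "0 \<le> \<gamma> * (2 / \<beta>)" using \<beta> \<gamma> by simp
  then have "a1 < 0" "a2 < 0" using \<gamma>(2) unfolding a1_def a2_def by (simp_all add: algebra_simps)
  then have "((\<lambda>t. c * (R * t powr a1 + t powr a2)) \<longlongrightarrow> c * (R * 0 + 0)) at_top"
    by (intro tendsto_intros tendsto_neg_powr filterlim_ident)
  moreover have "eventually (\<lambda>t. c * (R * t powr a1 + t powr a2) =
      c * t powr (1 - 2 / \<beta>) * (R + (t powr \<gamma>) powr (2 / \<beta>)) * t powr \<gamma>) at_top"
    using eventually_gt_at_top[of 0]
    by eventually_elim (simp add: a1_def a2_def powr_powr algebra_simps flip: powr_add)
  ultimately show ?thesis by (simp add: tendsto_cong)
qed

locale exp_young_normalization =
  fixes \<beta> N t0 :: real and B b lam :: "real \<Rightarrow> real"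
  assumes beta: "0 < \<beta>" "\<beta> \<le> 2"
    and N: "N > 0"
    and t0: "t0 > 0"
    and young: "young_function B"
    and Bexp: "\<And>t. t > t0 \<Longrightarrow> B t = N * exp (t powr \<beta>)"
    and Bint: "\<And>t. t \<ge> 0 \<Longrightarrow> (b has_integral B t) {0..t}"
    and bmono: "mono_on {0..} b"
    and bleft: "\<And>t. t > 0 \<Longrightarrow> continuous (at_left t) b"
    and lam: "\<And>t. t > 0 \<Longrightarrow> lam t > 0 \<and>
        ((\<lambda>\<tau>. B (gen_inv b (lam t * exp (\<tau>\<^sup>2 / 2))) * exp (- (\<tau>\<^sup>2 / 2)))
           has_integral sqrt (2 * pi)) {0..t}"
begin

lemma b_subgradient: "0 \<le> x \<Longrightarrow> 0 \<le> y \<Longrightarrow> (y - x) * b x \<le> B y - B x"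
  using integral_increment_bounds[OF Bint bmono, of x y] integral_increment_bounds[OF Bint bmono, of y x]
  by (cases "x \<le> y") (auto simp: algebra_simps)

lemma B_le_mult_b: "0 \<le> x \<Longrightarrow> B x \<le> x * b x"
  using b_subgradient[of x 0] young by (simp add: young_function_def)

lemma b_explicit: assumes x: "t0 < x" shows "b x = N * exp (x powr \<beta>) * (\<beta> * x powr (\<beta> - 1))"
proof (rule subgradient_eq_derivative)
  have "((\<lambda>y. N * exp (y powr \<beta>)) has_real_derivative N * exp (x powr \<beta>) * (\<beta> * x powr (\<beta> - 1))) (at x)"
    using x t0 by (auto intro!: derivative_eq_intros)
  then show "(B has_real_derivative N * exp (x powr \<beta>) * (\<beta> * x powr (\<beta> - 1))) (at x)"
    by (rule has_field_derivative_transform_within_open[where S = "{t0<..}"]) (use x Bexp in auto)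
  have "eventually (\<lambda>y. y \<in> {0<..}) (at x)"
    by (rule eventually_at_in_open') (use x t0 in auto)
  then show "eventually (\<lambda>y. (y - x) * b x \<le> B y - B x) (at x)"
    by eventually_elim (use x t0 in \<open>auto intro: b_subgradient\<close>)
qed

lemma isCont_b: assumes x: "t0 < x" shows "isCont b x"
proof -
  have "eventually (\<lambda>y. y \<in> {t0<..}) (nhds x)"
    by (rule eventually_nhds_in_open) (use x in auto)
  then have "eventually (\<lambda>y. b y = N * exp (y powr \<beta>) * (\<beta> * y powr (\<beta> - 1))) (nhds x)"
    by eventually_elim (simp add: b_explicit)
  then show ?thesis
    by (subst isCont_cong) (use x t0 in \<open>auto intro!: continuous_intros\<close>)
qed

lemma eventually_b_explicit:
  "eventually (\<lambda>x. b x = N * exp (x powr \<beta>) * (\<beta> * x powr (\<beta> - 1))) at_top"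
  using eventually_gt_at_top[of t0] by eventually_elim (rule b_explicit)

lemma b_unbounded: "\<exists>x\<ge>0. s \<le> b x"
proof -
  have "filterlim (\<lambda>x. N * exp (x powr \<beta>) * (\<beta> * x powr (\<beta> - 1))) at_top at_top"
    using N beta by real_asymp
  then have "filterlim b at_top at_top"
    by (rule filterlim_cong[THEN iffD1, rotated -1]) (use eventually_b_explicit in \<open>auto elim: eventually_mono\<close>)
  then have "eventually (\<lambda>x. s \<le> b x) at_top" by (simp add: filterlim_at_top)
  then have "eventually (\<lambda>x. 0 \<le> x \<and> s \<le> b x) at_top"
    by (rule eventually_conj[OF eventually_ge_at_top])
  then show ?thesis by (metis (lifting) eventually_at_top_linorder order.refl)
qed

lemma b_gen_inv: "t0 < gen_inv b s \<Longrightarrow> b (gen_inv b s) = s"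
  using b_gen_inv_eq[OF bmono b_unbounded _ isCont_b] t0 by simp

lemma B_gen_inv: assumes r: "t0 < gen_inv b s"
  shows "B (gen_inv b s) = s * gen_inv b s powr (1 - \<beta>) / \<beta>"
proof -
  define r where "r = gen_inv b s"
  have s: "s = N * exp (r powr \<beta>) * (\<beta> * r powr (\<beta> - 1))"
    using b_gen_inv[OF r] b_explicit[OF r] unfolding r_def by simp
  have "r powr (\<beta> - 1) * r powr (1 - \<beta>) = 1"
    using r t0 unfolding r_def by (simp add: powr_add[symmetric])
  then have "s * r powr (1 - \<beta>) / \<beta> = N * exp (r powr \<beta>)"
    unfolding s using beta by simp
  then show ?thesis using Bexp[OF r] unfolding r_def by simp
qed

lemma B_gen_inv_le: "B (gen_inv b s) \<le> s * gen_inv b s"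
proof (cases "gen_inv b s = 0")
  case True
  then show ?thesis using young by (simp add: young_function_def)
next
  case False
  then have r: "0 < gen_inv b s" using gen_inv_nonneg[OF b_unbounded] by (simp add: less_le)
  have "B (gen_inv b s) \<le> gen_inv b s * b (gen_inv b s)" using B_le_mult_b r by simp
  also have "\<dots> \<le> gen_inv b s * s"
    using b_gen_inv_le[OF r bleft[OF r]] r by (simp add: mult_left_mono)
  finally show ?thesis by (simp add: mult.commute)
qed

lemma B_gen_inv_mono: "s1 \<le> s2 \<Longrightarrow> B (gen_inv b s1) \<le> B (gen_inv b s2)"
  by (rule young_function_mono[OF young gen_inv_nonneg[OF b_unbounded] gen_inv_mono[OF b_unbounded]])

lemma ln_b_asymp: "((\<lambda>x. ln (b x) / x powr \<beta>) \<longlongrightarrow> 1) at_top"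
proof -
  have "((\<lambda>x. ln (N * exp (x powr \<beta>) * (\<beta> * x powr (\<beta> - 1))) / x powr \<beta>) \<longlongrightarrow> 1) at_top"
    using N beta by real_asymp
  then show ?thesis
    by (rule tendsto_cong[THEN iffD1, rotated]) (use eventually_b_explicit in \<open>auto elim: eventually_mono\<close>)
qed

lemma gen_inv_asymp: "((\<lambda>s. gen_inv b s powr \<beta> / ln s) \<longlongrightarrow> 1) at_top"
proof -
  note gen_inv_lim = gen_inv_at_top[OF bmono b_unbounded]
  have "((\<lambda>x. x powr \<beta> / ln (b x)) \<longlongrightarrow> 1) at_top"
    using tendsto_inverse[OF ln_b_asymp] by simp
  then have "((\<lambda>s. gen_inv b s powr \<beta> / ln (b (gen_inv b s))) \<longlongrightarrow> 1) at_top"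
    by (rule filterlim_compose[OF _ gen_inv_lim])
  moreover have "eventually (\<lambda>s. t0 < gen_inv b s) at_top"
    using gen_inv_lim by (simp add: filterlim_at_top_dense)
  then have "eventually (\<lambda>s. gen_inv b s powr \<beta> / ln (b (gen_inv b s)) = gen_inv b s powr \<beta> / ln s) at_top"
    by eventually_elim (simp add: b_gen_inv)
  ultimately show ?thesis by (rule tendsto_cong[THEN iffD1, rotated])
qed

lemma gen_inv_exp_le: "\<exists>R. \<forall>m\<ge>0. gen_inv b (exp (m\<^sup>2 / 2)) \<le> R + m powr (2 / \<beta>)"
proof -
  have "eventually (\<lambda>x. x powr \<beta> / 2 \<le> ln (N * exp (x powr \<beta>) * (\<beta> * x powr (\<beta> - 1)))) at_top"
    using N beta by real_asymp
  with eventually_b_explicit eventually_gt_at_top[of t0]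
  have "eventually (\<lambda>x. x powr \<beta> / 2 \<le> ln (b x) \<and> 0 < b x) at_top"
    by eventually_elim (use N beta t0 in simp)
  then obtain R0 where R0: "\<And>x. R0 \<le> x \<Longrightarrow> x powr \<beta> / 2 \<le> ln (b x) \<and> 0 < b x"
    unfolding eventually_at_top_linorder by blast
  define R where "R = max R0 0"
  have "R \<ge> 0" unfolding R_def by simp
  have "gen_inv b (exp (m\<^sup>2 / 2)) \<le> R + m powr (2 / \<beta>)" if m: "m \<ge> 0" for m
  proof -
    define x where "x = max R (m powr (2 / \<beta>))"
    have bx: "x powr \<beta> / 2 \<le> ln (b x)" "0 < b x" using R0[of x] unfolding x_def R_def by auto
    have "m\<^sup>2 = (m powr (2 / \<beta>)) powr \<beta>"
      using m beta by (simp add: powr_powr)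
    also have "\<dots> \<le> x powr \<beta>" unfolding x_def using beta by (intro powr_mono2) auto
    finally have "exp (m\<^sup>2 / 2) \<le> exp (ln (b x))" using bx(1) by simp
    then have "exp (m\<^sup>2 / 2) \<le> b x" using bx(2) by simp
    then have "gen_inv b (exp (m\<^sup>2 / 2)) \<le> x" by (intro gen_inv_le) (auto simp: x_def R_def)
    also have "x \<le> R + m powr (2 / \<beta>)" unfolding x_def using \<open>R \<ge> 0\<close> by simp
    finally show ?thesis .
  qed
  then show ?thesis by blast
qed

definition integrand :: "real \<Rightarrow> real \<Rightarrow> real" where
  "integrand \<Lambda> \<tau> = B (gen_inv b (\<Lambda> * exp (\<tau>\<^sup>2 / 2))) * exp (- (\<tau>\<^sup>2 / 2))"

text \<open>The integrand with \<rho>(\<Lambda> exp(\<tau>^2/2))^\<beta> replaced by its asymptotic value \<tau>^2/2.\<close>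
definition profile :: "real \<Rightarrow> real \<Rightarrow> real" where
  "profile \<Lambda> \<tau> = \<Lambda> / \<beta> * (\<tau>\<^sup>2 / 2) powr ((1 - \<beta>) / \<beta>)"

lemma integrand_nonneg: "0 \<le> integrand \<Lambda> \<tau>"
  using young gen_inv_nonneg[OF b_unbounded] by (simp add: integrand_def young_function_def)

lemma integrand_mono: "\<Lambda>1 \<le> \<Lambda>2 \<Longrightarrow> integrand \<Lambda>1 \<tau> \<le> integrand \<Lambda>2 \<tau>"
  unfolding integrand_def by (intro mult_right_mono B_gen_inv_mono) auto

lemma integrand_eq_profile:
  assumes \<Lambda>: "0 < \<Lambda>" and \<tau>: "\<tau> \<noteq> 0" and r: "t0 < gen_inv b (\<Lambda> * exp (\<tau>\<^sup>2 / 2))"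
  shows "integrand \<Lambda> \<tau> =
    profile \<Lambda> \<tau> * (gen_inv b (\<Lambda> * exp (\<tau>\<^sup>2 / 2)) powr \<beta> / (\<tau>\<^sup>2 / 2)) powr ((1 - \<beta>) / \<beta>)"
proof -
  define r where "r = gen_inv b (\<Lambda> * exp (\<tau>\<^sup>2 / 2))"
  have "integrand \<Lambda> \<tau> = \<Lambda> / \<beta> * r powr (1 - \<beta>)"
    using B_gen_inv[OF r] unfolding integrand_def r_def by (simp add: exp_minus field_simps)
  also have "r powr (1 - \<beta>) = (r powr \<beta> / (\<tau>\<^sup>2 / 2) * (\<tau>\<^sup>2 / 2)) powr ((1 - \<beta>) / \<beta>)"
    using \<tau> beta by (simp add: powr_powr)
  also have "\<dots> = (r powr \<beta> / (\<tau>\<^sup>2 / 2)) powr ((1 - \<beta>) / \<beta>) * (\<tau>\<^sup>2 / 2) powr ((1 - \<beta>) / \<beta>)"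
    by (rule powr_mult)
  finally show ?thesis unfolding profile_def r_def by simp
qed

lemma integrand_le:
  obtains R where "\<And>\<Lambda> \<tau> m. \<lbrakk>0 < \<Lambda>; \<Lambda> \<le> 1; 0 \<le> \<tau>; \<tau> \<le> m\<rbrakk> \<Longrightarrow> integrand \<Lambda> \<tau> \<le> \<Lambda> * (R + m powr (2 / \<beta>))"
proof -
  obtain R where R: "\<And>m. m \<ge> 0 \<Longrightarrow> gen_inv b (exp (m\<^sup>2 / 2)) \<le> R + m powr (2 / \<beta>)"
    using gen_inv_exp_le by blast
  have "integrand \<Lambda> \<tau> \<le> \<Lambda> * (R + m powr (2 / \<beta>))" if "0 < \<Lambda>" "\<Lambda> \<le> 1" "0 \<le> \<tau>" "\<tau> \<le> m" for \<Lambda> \<tau> m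
  proof -
    let ?s = "\<Lambda> * exp (\<tau>\<^sup>2 / 2)"
    have "\<tau>\<^sup>2 \<le> m\<^sup>2" using that by (simp add: power_mono)
    have "?s \<le> exp (\<tau>\<^sup>2 / 2)" using that by (intro mult_left_le_one_le) auto
    also have "\<dots> \<le> exp (m\<^sup>2 / 2)" using \<open>\<tau>\<^sup>2 \<le> m\<^sup>2\<close> by simp
    finally have "?s \<le> exp (m\<^sup>2 / 2)" .
    have "integrand \<Lambda> \<tau> \<le> ?s * gen_inv b ?s * exp (- (\<tau>\<^sup>2 / 2))"
      unfolding integrand_def by (intro mult_right_mono B_gen_inv_le) simp
    also have "\<dots> = \<Lambda> * gen_inv b ?s" by (simp add: exp_minus)
    also have "\<dots> \<le> \<Lambda> * gen_inv b (exp (m\<^sup>2 / 2))"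
      using gen_inv_mono[OF b_unbounded \<open>?s \<le> exp (m\<^sup>2 / 2)\<close>] that by simp
    also have "\<dots> \<le> \<Lambda> * (R + m powr (2 / \<beta>))" using R[of m] that by simp
    finally show ?thesis .
  qed
  then show thesis using that by blast
qed

lemma gen_inv_powr_near_ln:
  assumes "0 < \<epsilon>"
  shows "eventually (\<lambda>s. t0 < gen_inv b s \<and>
    (1 - \<epsilon>) * ln s < gen_inv b s powr \<beta> \<and> gen_inv b s powr \<beta> < (1 + \<epsilon>) * ln s) at_top"
proof -
  have "eventually (\<lambda>s. \<bar>gen_inv b s powr \<beta> / ln s - 1\<bar> < \<epsilon>) at_top"
    using gen_inv_asymp assms by (auto simp: tendsto_iff dist_real_def)
  moreover have "eventually (\<lambda>s. t0 < gen_inv b s) at_top"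
    using gen_inv_at_top[OF bmono b_unbounded] by (simp add: filterlim_at_top_dense)
  moreover have "eventually (\<lambda>s::real. 0 < ln s) at_top" by real_asymp
  ultimately show ?thesis
  proof eventually_elim
    case (elim s)
    then have "1 - \<epsilon> < gen_inv b s powr \<beta> / ln s" "gen_inv b s powr \<beta> / ln s < 1 + \<epsilon>" by linarith+
    with elim show ?case by (simp add: pos_divide_less_eq pos_less_divide_eq)
  qed
qed

lemma gen_inv_powr_near_half_square:
  assumes \<epsilon>: "0 < \<epsilon>" "\<epsilon> \<le> 1/2"
  obtains M where "0 \<le> M" "\<And>\<Lambda> \<tau>. \<lbrakk>0 < \<Lambda>; \<Lambda> \<le> 1; M * (1 - ln \<Lambda>) \<le> \<tau>\<^sup>2\<rbrakk> \<Longrightarrow>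
      \<tau> \<noteq> 0 \<and> t0 < gen_inv b (\<Lambda> * exp (\<tau>\<^sup>2 / 2)) \<and>
      \<bar>gen_inv b (\<Lambda> * exp (\<tau>\<^sup>2 / 2)) powr \<beta> / (\<tau>\<^sup>2 / 2) - 1\<bar> < 2 * \<epsilon>"
proof -
  obtain S where S: "\<And>s. S \<le> s \<Longrightarrow> t0 < gen_inv b s \<and>
      (1 - \<epsilon>) * ln s < gen_inv b s powr \<beta> \<and> gen_inv b s powr \<beta> < (1 + \<epsilon>) * ln s"
    using gen_inv_powr_near_ln[OF \<epsilon>(1)] unfolding eventually_at_top_linorder by blast
  define M where "M = max (2 / \<epsilon>) (4 * ln (max S 1))"
  have M: "2 / \<epsilon> \<le> M" "4 * ln (max S 1) \<le> M" "0 \<le> M"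
    using \<epsilon> unfolding M_def by (auto simp: le_max_iff_disj)
  have "\<tau> \<noteq> 0 \<and> t0 < gen_inv b (\<Lambda> * exp (\<tau>\<^sup>2 / 2)) \<and>
      \<bar>gen_inv b (\<Lambda> * exp (\<tau>\<^sup>2 / 2)) powr \<beta> / (\<tau>\<^sup>2 / 2) - 1\<bar> < 2 * \<epsilon>"
    if \<Lambda>: "0 < \<Lambda>" "\<Lambda> \<le> 1" and \<tau>: "M * (1 - ln \<Lambda>) \<le> \<tau>\<^sup>2" for \<Lambda> \<tau>
  proof -
    define T where "T = \<tau>\<^sup>2 / 2"
    define s where "s = \<Lambda> * exp T"
    define r where "r = gen_inv b s"
    have ln\<Lambda>: "1 \<le> 1 - ln \<Lambda>" using \<Lambda> by simp
    have "M * 1 \<le> M * (1 - ln \<Lambda>)" by (rule mult_left_mono[OF ln\<Lambda> M(3)])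
    moreover have "2 / \<epsilon> * (1 - ln \<Lambda>) \<le> M * (1 - ln \<Lambda>)"
      by (rule mult_right_mono[OF M(1)]) (use ln\<Lambda> in linarith)
    ultimately have M\<tau>: "M \<le> \<tau>\<^sup>2" "2 / \<epsilon> * (1 - ln \<Lambda>) \<le> \<tau>\<^sup>2" using \<tau> by linarith+
    have "0 < 2 / \<epsilon>" using \<epsilon> by simp
    then have T: "0 < T" using M(1) M\<tau>(1) unfolding T_def by linarith
    note lns = ln_scaled_exp_bounds[OF \<Lambda> \<epsilon>(1) M\<tau>(2), folded T_def s_def]
    have "1 / 2 * T \<le> (1 - \<epsilon>) * T" using \<epsilon>(2) T by (intro mult_right_mono) auto
    then have "ln (max S 1) \<le> ln s" using lns(1) M\<tau>(1) M(2) unfolding T_def by linarith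
    moreover have "0 < s" unfolding s_def using \<Lambda> by simp
    ultimately have "S \<le> s" by (simp add: ln_le_cancel_iff)
    with S have r: "t0 < r" "(1 - \<epsilon>) * ln s < r powr \<beta>" "r powr \<beta> < (1 + \<epsilon>) * ln s"
      unfolding r_def by auto
    moreover have "(1 - \<epsilon>) * ((1 - \<epsilon>) * T) \<le> (1 - \<epsilon>) * ln s" using lns(1) \<epsilon> by (intro mult_left_mono) auto
    moreover have "(1 - 2 * \<epsilon>) * T \<le> (1 - \<epsilon>) * ((1 - \<epsilon>) * T)" using T by (simp add: algebra_simps)
    moreover have "(1 + \<epsilon>) * ln s \<le> (1 + \<epsilon>) * T" using lns(2) \<epsilon> by (intro mult_left_mono) auto
    ultimately have "(1 - 2 * \<epsilon>) * T < r powr \<beta>" "r powr \<beta> < (1 + \<epsilon>) * T" by linarith+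
    then have "1 - 2 * \<epsilon> < r powr \<beta> / T" "r powr \<beta> / T < 1 + \<epsilon>"
      using T by (simp_all add: pos_divide_less_eq pos_less_divide_eq)
    then have "\<bar>r powr \<beta> / T - 1\<bar> < 2 * \<epsilon>" unfolding abs_less_iff using \<epsilon> by linarith
    with r(1) T show ?thesis unfolding r_def s_def T_def by auto
  qed
  with M(3) show thesis using that by blast
qed

lemma integrand_asymp:
  assumes \<eta>: "0 < \<eta>"
  obtains M where "0 \<le> M" "\<And>\<Lambda> \<tau>. \<lbrakk>0 < \<Lambda>; \<Lambda> \<le> 1; M * (1 - ln \<Lambda>) \<le> \<tau>\<^sup>2\<rbrakk> \<Longrightarrow>
      \<bar>integrand \<Lambda> \<tau> - profile \<Lambda> \<tau>\<bar> \<le> \<eta> * profile \<Lambda> \<tau>"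
proof -
  define e where "e = (1 - \<beta>) / \<beta>"
  have "continuous (at 1) (\<lambda>q::real. q powr e)" by (auto intro!: continuous_intros)
  then obtain \<delta> where \<delta>: "\<delta> > 0" "\<And>q. \<bar>q - 1\<bar> < \<delta> \<Longrightarrow> \<bar>q powr e - 1\<bar> < \<eta>"
    using \<eta> unfolding continuous_at_eps_delta dist_real_def by force
  obtain M where M: "0 \<le> M" and near: "\<And>\<Lambda> \<tau>. \<lbrakk>0 < \<Lambda>; \<Lambda> \<le> 1; M * (1 - ln \<Lambda>) \<le> \<tau>\<^sup>2\<rbrakk> \<Longrightarrow>
      \<tau> \<noteq> 0 \<and> t0 < gen_inv b (\<Lambda> * exp (\<tau>\<^sup>2 / 2)) \<and>
      \<bar>gen_inv b (\<Lambda> * exp (\<tau>\<^sup>2 / 2)) powr \<beta> / (\<tau>\<^sup>2 / 2) - 1\<bar> < 2 * min (1/2) (\<delta>/2)"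
    by (rule gen_inv_powr_near_half_square[of "min (1/2) (\<delta>/2)"]) (use \<delta> in auto)
  have "\<bar>integrand \<Lambda> \<tau> - profile \<Lambda> \<tau>\<bar> \<le> \<eta> * profile \<Lambda> \<tau>"
    if "0 < \<Lambda>" "\<Lambda> \<le> 1" "M * (1 - ln \<Lambda>) \<le> \<tau>\<^sup>2" for \<Lambda> \<tau>
  proof -
    define q where "q = gen_inv b (\<Lambda> * exp (\<tau>\<^sup>2 / 2)) powr \<beta> / (\<tau>\<^sup>2 / 2)"
    have "\<bar>q - 1\<bar> < \<delta>" using near[OF that] unfolding q_def by linarith
    then have close: "\<bar>q powr e - 1\<bar> \<le> \<eta>" using \<delta>(2) by fastforce
    have P: "0 \<le> profile \<Lambda> \<tau>" using that beta by (simp add: profile_def)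
    have "integrand \<Lambda> \<tau> - profile \<Lambda> \<tau> = profile \<Lambda> \<tau> * (q powr e - 1)"
      using integrand_eq_profile[OF that(1)] near[OF that] unfolding q_def e_def by (simp add: algebra_simps)
    then have "\<bar>integrand \<Lambda> \<tau> - profile \<Lambda> \<tau>\<bar> = profile \<Lambda> \<tau> * \<bar>q powr e - 1\<bar>"
      using P by (simp add: abs_mult)
    also have "\<dots> \<le> profile \<Lambda> \<tau> * \<eta>" by (rule mult_left_mono[OF close P])
    finally show ?thesis by (simp add: mult.commute)
  qed
  with M show thesis using that by blast
qed

lemma profile_has_integral:
  assumes A: "\<And>\<tau>. 0 < \<tau> \<Longrightarrow> (A has_real_derivative (\<tau>\<^sup>2 / 2) powr ((1 - \<beta>) / \<beta>)) (at \<tau>)"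
    and m: "0 < m" "m \<le> t"
  shows "(profile \<Lambda> has_integral \<Lambda> / \<beta> * (A t - A m)) {m..t}"
proof -
  have "((\<lambda>\<tau>. (\<tau>\<^sup>2 / 2) powr ((1 - \<beta>) / \<beta>)) has_integral A t - A m) {m..t}"
  proof (rule fundamental_theorem_of_calculus[OF m(2)])
    fix x assume "x \<in> {m..t}"
    then show "(A has_vector_derivative (x\<^sup>2 / 2) powr ((1 - \<beta>) / \<beta>)) (at x within {m..t})"
      using A[of x] m
      by (auto simp: has_real_derivative_iff_has_vector_derivative intro: has_vector_derivative_at_within)
  qed
  then show ?thesis unfolding profile_def by (rule has_integral_mult_right)
qed

lemma lam_integral_split:
  assumes "0 \<le> m" "m \<le> t" "0 < t"
  shows "integral {0..m} (integrand (lam t)) + integral {m..t} (integrand (lam t)) = sqrt (2 * pi)"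
    and "integrand (lam t) integrable_on {0..m}" "integrand (lam t) integrable_on {m..t}"
proof -
  have int: "(integrand (lam t) has_integral sqrt (2 * pi)) {0..t}"
    using lam[OF \<open>0 < t\<close>] unfolding integrand_def by simp
  show "integrand (lam t) integrable_on {0..m}" "integrand (lam t) integrable_on {m..t}"
    using assms int by (auto intro: integrable_subinterval_real has_integral_integrable)
  have "integral {0..m} (integrand (lam t)) + integral {m..t} (integrand (lam t)) =
      integral {0..t} (integrand (lam t))"
    by (rule Henstock_Kurzweil_Integration.integral_combine) (use assms int in auto)
  also have "\<dots> = sqrt (2 * pi)" using int by (rule integral_unique)
  finally show "integral {0..m} (integrand (lam t)) + integral {m..t} (integrand (lam t)) = sqrt (2 * pi)" .
qed

lemma profile_integral_le_normalization:
  assumes A: "\<And>\<tau>. 0 < \<tau> \<Longrightarrow> (A has_real_derivative (\<tau>\<^sup>2 / 2) powr ((1 - \<beta>) / \<beta>)) (at \<tau>)"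
    and m: "0 < m" "m \<le> t" and \<Lambda>: "\<Lambda> \<le> lam t"
    and close: "\<And>\<tau>. m \<le> \<tau> \<Longrightarrow> (1 - \<eta>) * profile \<Lambda> \<tau> \<le> integrand \<Lambda> \<tau>"
  shows "(1 - \<eta>) * (\<Lambda> / \<beta> * (A t - A m)) \<le> sqrt (2 * pi)"
proof -
  have "0 \<le> m" "0 < t" using m by auto
  note split = lam_integral_split[OF this(1) m(2) this(2)]
  have "((\<lambda>\<tau>. (1 - \<eta>) * profile \<Lambda> \<tau>) has_integral (1 - \<eta>) * (\<Lambda> / \<beta> * (A t - A m))) {m..t}"
    by (intro has_integral_mult_right profile_has_integral[OF A m])
  then have "(1 - \<eta>) * (\<Lambda> / \<beta> * (A t - A m)) \<le> integral {m..t} (integrand (lam t))"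
    by (rule has_integral_le[OF _ integrable_integral[OF split(3)]])
      (use m in \<open>auto intro: order_trans[OF close integrand_mono[OF \<Lambda>]]\<close>)
  moreover have "0 \<le> integral {0..m} (integrand (lam t))"
    by (rule integral_nonneg[OF split(2)]) (use m in \<open>auto simp: integrand_nonneg\<close>)
  ultimately show ?thesis using split(1) m by linarith
qed

lemma normalization_le_profile_integral:
  assumes A: "\<And>\<tau>. 0 < \<tau> \<Longrightarrow> (A has_real_derivative (\<tau>\<^sup>2 / 2) powr ((1 - \<beta>) / \<beta>)) (at \<tau>)"
    and m: "0 < m" "m \<le> t" and \<Lambda>: "lam t \<le> \<Lambda>"
    and close: "\<And>\<tau>. m \<le> \<tau> \<Longrightarrow> integrand \<Lambda> \<tau> \<le> (1 + \<eta>) * profile \<Lambda> \<tau>"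
    and low: "\<And>\<tau>. 0 \<le> \<tau> \<Longrightarrow> \<tau> \<le> m \<Longrightarrow> integrand \<Lambda> \<tau> \<le> K"
  shows "sqrt (2 * pi) \<le> K * m + (1 + \<eta>) * (\<Lambda> / \<beta> * (A t - A m))"
proof -
  have "0 \<le> m" "0 < t" using m by auto
  note split = lam_integral_split[OF this(1) m(2) this(2)]
  have "((\<lambda>\<tau>. (1 + \<eta>) * profile \<Lambda> \<tau>) has_integral (1 + \<eta>) * (\<Lambda> / \<beta> * (A t - A m))) {m..t}"
    by (intro has_integral_mult_right profile_has_integral[OF A m])
  then have "integral {m..t} (integrand (lam t)) \<le> (1 + \<eta>) * (\<Lambda> / \<beta> * (A t - A m))"
    by (rule has_integral_le[OF integrable_integral[OF split(3)]])
      (use m in \<open>auto intro: order_trans[OF integrand_mono[OF \<Lambda>] close]\<close>)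
  moreover have "integral {0..m} (integrand (lam t)) \<le> integral {0..m} (\<lambda>_. K)"
    by (rule integral_le[OF split(2)]) (use m in \<open>auto intro: order_trans[OF integrand_mono[OF \<Lambda>] low]\<close>)
  moreover have "integral {0..m} (\<lambda>_. K) = K * m" using m by simp
  ultimately show ?thesis using split(1) by linarith
qed

text \<open>
  D is the claimed size of lam t, m a cutoff and A an antiderivative of the profile shape:
  the profile integral over [m t, t] at scale D t must tend to the normalisation, and the crude
  bound on [0, m t] must become negligible.
\<close>
context
  fixes D m A :: "real \<Rightarrow> real"
  assumes D_pos: "eventually (\<lambda>t. 0 < D t) at_top"
    and D_lim: "(D \<longlongrightarrow> 0) at_top"
    and m: "eventually (\<lambda>t. 0 < m t \<and> m t \<le> t) at_top"
    and m_large: "\<And>M. eventually (\<lambda>t. M * (1 - ln (D t)) \<le> (m t)\<^sup>2) at_top"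
    and A: "\<And>\<tau>. 0 < \<tau> \<Longrightarrow> (A has_real_derivative (\<tau>\<^sup>2 / 2) powr ((1 - \<beta>) / \<beta>)) (at \<tau>)"
    and main: "((\<lambda>t. D t / \<beta> * (A t - A (m t))) \<longlongrightarrow> sqrt (2 * pi)) at_top"
    and small: "\<And>R. ((\<lambda>t. D t * (R + m t powr (2 / \<beta>)) * m t) \<longlongrightarrow> 0) at_top"
begin

lemma eventually_profile_regime:
  assumes \<theta>: "0 < \<theta>" and \<eta>: "0 < \<eta>"
  shows "eventually (\<lambda>t. 0 < m t \<and> m t \<le> t \<and> 0 < \<theta> * D t \<and> \<theta> * D t \<le> 1 \<and>
    (\<forall>\<tau>\<ge>m t. (1 - \<eta>) * profile (\<theta> * D t) \<tau> \<le> integrand (\<theta> * D t) \<tau> \<and>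
              integrand (\<theta> * D t) \<tau> \<le> (1 + \<eta>) * profile (\<theta> * D t) \<tau>)) at_top"
proof -
  obtain M where M: "0 \<le> M" and close: "\<And>\<Lambda> \<tau>. \<lbrakk>0 < \<Lambda>; \<Lambda> \<le> 1; M * (1 - ln \<Lambda>) \<le> \<tau>\<^sup>2\<rbrakk> \<Longrightarrow>
      \<bar>integrand \<Lambda> \<tau> - profile \<Lambda> \<tau>\<bar> \<le> \<eta> * profile \<Lambda> \<tau>"
    using integrand_asymp[OF \<eta>] by blast
  have "((\<lambda>t. \<theta> * D t) \<longlongrightarrow> \<theta> * 0) at_top" by (intro tendsto_intros D_lim)
  then have "eventually (\<lambda>t. \<theta> * D t < 1) at_top" by (rule order_tendstoD) simp
  moreover have "eventually (\<lambda>t. D t < 1) at_top" using D_lim by (rule order_tendstoD) simp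
  moreover note D_pos m m_large[of "M * (1 + \<bar>ln \<theta>\<bar>)"]
  ultimately show ?thesis
  proof eventually_elim
    case (elim t)
    have "1 - ln (\<theta> * D t) \<le> (1 + \<bar>ln \<theta>\<bar>) * (1 - ln (D t))"
    proof -
      have "\<bar>ln \<theta>\<bar> * 1 \<le> \<bar>ln \<theta>\<bar> * (1 - ln (D t))" using elim by (intro mult_left_mono) auto
      then show ?thesis using elim \<theta> by (simp add: ln_mult algebra_simps)
    qed
    then have "M * (1 - ln (\<theta> * D t)) \<le> (m t)\<^sup>2"
      using elim M by (smt (verit) mult_left_mono mult.assoc)
    moreover have "(m t)\<^sup>2 \<le> \<tau>\<^sup>2" if "m t \<le> \<tau>" for \<tau> using elim that by (simp add: power_mono)
    ultimately have "M * (1 - ln (\<theta> * D t)) \<le> \<tau>\<^sup>2" if "m t \<le> \<tau>" for \<tau>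
      using that by (meson order_trans)
    then have "\<bar>integrand (\<theta> * D t) \<tau> - profile (\<theta> * D t) \<tau>\<bar> \<le> \<eta> * profile (\<theta> * D t) \<tau>"
      if "m t \<le> \<tau>" for \<tau>
      using elim \<theta> that by (intro close) auto
    then show ?case using elim \<theta> by (auto simp: abs_le_iff algebra_simps)
  qed
qed

lemma lam_eventually_le:
  assumes \<theta>: "1 < \<theta>"
  shows "eventually (\<lambda>t. lam t \<le> \<theta> * D t) at_top"
proof -
  define \<eta> where "\<eta> = (\<theta> - 1) / (2 * \<theta>)"
  have \<eta>: "0 < \<eta>" "1 < (1 - \<eta>) * \<theta>" using \<theta> by (auto simp: \<eta>_def field_simps)
  have "((\<lambda>t. (1 - \<eta>) * \<theta> * (D t / \<beta> * (A t - A (m t)))) \<longlongrightarrow> (1 - \<eta>) * \<theta> * sqrt (2 * pi)) at_top"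
    by (intro tendsto_intros main)
  moreover have "sqrt (2 * pi) < (1 - \<eta>) * \<theta> * sqrt (2 * pi)" using \<eta>(2) by simp
  ultimately have "eventually (\<lambda>t. sqrt (2 * pi) < (1 - \<eta>) * \<theta> * (D t / \<beta> * (A t - A (m t)))) at_top"
    by (rule order_tendstoD)
  moreover have "0 < \<theta>" using \<theta> by simp
  note regime = eventually_profile_regime[OF this \<eta>(1)]
  ultimately show ?thesis using regime
  proof eventually_elim
    case (elim t)
    show ?case
    proof (rule ccontr)
      assume "\<not> lam t \<le> \<theta> * D t"
      then have "(1 - \<eta>) * (\<theta> * D t / \<beta> * (A t - A (m t))) \<le> sqrt (2 * pi)"
        using elim by (intro profile_integral_le_normalization[OF A]) auto
      moreover have "(1 - \<eta>) * (\<theta> * D t / \<beta> * (A t - A (m t))) =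
          (1 - \<eta>) * \<theta> * (D t / \<beta> * (A t - A (m t)))" by simp
      ultimately show False using elim by linarith
    qed
  qed
qed

lemma lam_eventually_ge:
  assumes \<theta>: "0 < \<theta>" "\<theta> < 1"
  shows "eventually (\<lambda>t. \<theta> * D t \<le> lam t) at_top"
proof -
  define \<eta> where "\<eta> = (1 - \<theta>) / (2 * \<theta>)"
  have \<eta>: "0 < \<eta>" "(1 + \<eta>) * \<theta> < 1" using \<theta> by (auto simp: \<eta>_def field_simps)
  obtain R where R: "\<And>\<Lambda> \<tau> m. \<lbrakk>0 < \<Lambda>; \<Lambda> \<le> 1; 0 \<le> \<tau>; \<tau> \<le> m\<rbrakk> \<Longrightarrow> integrand \<Lambda> \<tau> \<le> \<Lambda> * (R + m powr (2 / \<beta>))"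
    using integrand_le by blast
  have "((\<lambda>t. \<theta> * (D t * (R + m t powr (2 / \<beta>)) * m t) + (1 + \<eta>) * \<theta> * (D t / \<beta> * (A t - A (m t))))
      \<longlongrightarrow> \<theta> * 0 + (1 + \<eta>) * \<theta> * sqrt (2 * pi)) at_top"
    by (intro tendsto_intros main small)
  moreover have "\<theta> * 0 + (1 + \<eta>) * \<theta> * sqrt (2 * pi) < sqrt (2 * pi)" using \<eta>(2) by simp
  ultimately have "eventually (\<lambda>t. \<theta> * (D t * (R + m t powr (2 / \<beta>)) * m t) +
      (1 + \<eta>) * \<theta> * (D t / \<beta> * (A t - A (m t))) < sqrt (2 * pi)) at_top"
    by (rule order_tendstoD)
  with eventually_profile_regime[OF \<theta>(1) \<eta>(1)] show ?thesis
  proof eventually_elim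
    case (elim t)
    show ?case
    proof (rule ccontr)
      assume "\<not> \<theta> * D t \<le> lam t"
      then have "sqrt (2 * pi) \<le> \<theta> * D t * (R + m t powr (2 / \<beta>)) * m t +
          (1 + \<eta>) * (\<theta> * D t / \<beta> * (A t - A (m t)))"
        using elim by (intro normalization_le_profile_integral[OF A]) (auto intro: R)
      moreover have "(1 + \<eta>) * (\<theta> * D t / \<beta> * (A t - A (m t))) =
          (1 + \<eta>) * \<theta> * (D t / \<beta> * (A t - A (m t)))" by simp
      moreover have "\<theta> * D t * (R + m t powr (2 / \<beta>)) * m t = \<theta> * (D t * (R + m t powr (2 / \<beta>)) * m t)"
        by simp
      ultimately show False using elim by linarith
    qed
  qed
qed

lemma lam_ratio_tendsto: "((\<lambda>t. lam t / D t) \<longlongrightarrow> 1) at_top"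
  by (rule tendsto_ratio_1I[OF D_pos lam_eventually_le lam_eventually_ge])

end

lemma lam_asymp_subcritical:
  assumes \<beta>2: "\<beta> < 2"
  shows "((\<lambda>t. lam t / (c_beta \<beta> * t powr (1 - 2 / \<beta>))) \<longlongrightarrow> 1) at_top"
proof -
  define e where "e = (1 - \<beta>) / \<beta>"
  define p where "p = 2 / \<beta> - 1"
  define q where "q = 2 / \<beta> + 1"
  \<comment> \<open>\<gamma> q = p/2 < p is what makes the contribution of [0, t^\<gamma>] negligible.\<close>
  define \<gamma> where "\<gamma> = p / (2 * q)"
  define c where "c = c_beta \<beta>"
  have p: "0 < p" "p = 2 * e + 1" "1 - 2 / \<beta> = - p"
    using beta \<beta>2 by (auto simp: p_def e_def field_simps)
  have "0 < 2 / \<beta>" using beta by simp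
  then have q: "1 < q" "p < q" unfolding p_def q_def by linarith+
  then have \<gamma>: "0 < \<gamma>" "\<gamma> < 1" "\<gamma> * q < p"
    using p(1) unfolding \<gamma>_def by (auto simp: pos_divide_less_eq)
  have c: "0 < c" "c * 2 powr (- e) / (\<beta> * p) = sqrt (2 * pi)"
    using c_beta_subcritical[OF beta(1) \<beta>2] beta \<beta>2 by (simp_all add: c_def c_beta_def e_def p_def)
  show ?thesis unfolding c_def[symmetric]
  proof (rule lam_ratio_tendsto[where m = "\<lambda>t. t powr \<gamma>" and A = "\<lambda>\<tau>. 2 powr (- e) * \<tau> powr p / p"])
    show "eventually (\<lambda>t. 0 < c * t powr (1 - 2 / \<beta>)) at_top"
      using c by real_asymp
    show "((\<lambda>t. c * t powr (1 - 2 / \<beta>)) \<longlongrightarrow> 0) at_top"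
      using c beta \<beta>2 by real_asymp
    have "eventually (\<lambda>t. t powr \<gamma> \<le> t) at_top" using \<gamma> by real_asymp
    with eventually_gt_at_top[of 0] show "eventually (\<lambda>t. 0 < t powr \<gamma> \<and> t powr \<gamma> \<le> t) at_top"
      by eventually_elim simp
    show "eventually (\<lambda>t. M * (1 - ln (c * t powr (1 - 2 / \<beta>))) \<le> (t powr \<gamma>)\<^sup>2) at_top" for M
      using c beta \<beta>2 \<gamma> by real_asymp
    show "((\<lambda>\<tau>. 2 powr (- e) * \<tau> powr p / p) has_real_derivative (\<tau>\<^sup>2 / 2) powr ((1 - \<beta>) / \<beta>)) (at \<tau>)"
      if "0 < \<tau>" for \<tau>
      using has_real_derivative_half_square_powr[of e \<tau>] p that unfolding e_def by simp
    have "((\<lambda>t. t powr (- p) * (t powr p - (t powr \<gamma>) powr p)) \<longlongrightarrow> 1) at_top"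
      using p \<gamma> by real_asymp
    from tendsto_mult_left[OF this, of "c * 2 powr (- e) / (\<beta> * p)"]
    have "((\<lambda>t. c * 2 powr (- e) / (\<beta> * p) * (t powr (- p) * (t powr p - (t powr \<gamma>) powr p)))
        \<longlongrightarrow> sqrt (2 * pi)) at_top"
      unfolding c(2) by simp
    moreover have "c * t powr (1 - 2 / \<beta>) / \<beta> * (2 powr (- e) * t powr p / p - 2 powr (- e) * (t powr \<gamma>) powr p / p)
        = c * 2 powr (- e) / (\<beta> * p) * (t powr (- p) * (t powr p - (t powr \<gamma>) powr p))" for t
      using p(1) beta unfolding p(3) by (simp add: field_simps)
    ultimately show "((\<lambda>t. c * t powr (1 - 2 / \<beta>) / \<beta> *
        (2 powr (- e) * t powr p / p - 2 powr (- e) * (t powr \<gamma>) powr p / p)) \<longlongrightarrow> sqrt (2 * pi)) at_top"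
      by simp
    show "((\<lambda>t. c * t powr (1 - 2 / \<beta>) * (R + (t powr \<gamma>) powr (2 / \<beta>)) * t powr \<gamma>) \<longlongrightarrow> 0) at_top" for R
      by (rule cutoff_remainder_tendsto_0) (use beta \<gamma> in \<open>auto simp: p_def q_def\<close>)
  qed
qed

lemma lam_asymp_critical:
  assumes \<beta>2: "\<beta> = 2"
  shows "((\<lambda>t. lam t * ln t / c_beta 2) \<longlongrightarrow> 1) at_top"
proof -
  define c where "c = c_beta 2"
  have c: "0 < c" "c * sqrt 2 / 2 = sqrt (2 * pi)" by (simp_all add: c_def c_beta_def real_sqrt_mult)
  have "((\<lambda>t. lam t / (c / ln t)) \<longlongrightarrow> 1) at_top"
  proof (rule lam_ratio_tendsto[where m = "\<lambda>t. ln t powr (1 / 4)" and A = "\<lambda>\<tau>. sqrt 2 * ln \<tau>"])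
    show "eventually (\<lambda>t::real. 0 < c / ln t) at_top" using c by real_asymp
    show "((\<lambda>t::real. c / ln t) \<longlongrightarrow> 0) at_top" using c by real_asymp
    have "eventually (\<lambda>t::real. 0 < ln t powr (1 / 4)) at_top"
      "eventually (\<lambda>t::real. ln t powr (1 / 4) \<le> t) at_top"
      by real_asymp+
    then show "eventually (\<lambda>t::real. 0 < ln t powr (1 / 4) \<and> ln t powr (1 / 4) \<le> t) at_top"
      by (rule eventually_conj)
    show "eventually (\<lambda>t::real. M * (1 - ln (c / ln t)) \<le> (ln t powr (1 / 4))\<^sup>2) at_top" for M
      using c by real_asymp
    show "((\<lambda>\<tau>. sqrt 2 * ln \<tau>) has_real_derivative (\<tau>\<^sup>2 / 2) powr ((1 - \<beta>) / \<beta>)) (at \<tau>)"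
      if "0 < \<tau>" for \<tau>
      using has_real_derivative_half_square_powr_minus_half[OF that] \<beta>2 by simp
    have "((\<lambda>t::real. c / ln t / 2 * (k * ln t - k * ln (ln t powr (1 / 4)))) \<longlongrightarrow> c * k / 2) at_top"
      for k by real_asymp
    from this[of "sqrt 2"] show "((\<lambda>t::real. c / ln t / \<beta> * (sqrt 2 * ln t - sqrt 2 * ln (ln t powr (1 / 4)))) \<longlongrightarrow> sqrt (2 * pi)) at_top"
      unfolding \<beta>2 c(2) .
    show "((\<lambda>t::real. c / ln t * (R + (ln t powr (1 / 4)) powr (2 / \<beta>)) * ln t powr (1 / 4)) \<longlongrightarrow> 0) at_top" for R
      unfolding \<beta>2 by real_asymp
  qed
  then show ?thesis by (simp add: c_def)
qed

end

theorem lemma3p6: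
  fixes \<beta> N t0 :: real and B b lam :: "real \<Rightarrow> real"
  assumes beta: "0 < \<beta>" "\<beta> \<le> 2"
    and N: "N > 0"
    and t0: "t0 > 0"
    and young: "young_function B"
    and Bexp: "\<And>t. t > t0 \<Longrightarrow> B t = N * exp (t powr \<beta>)"
    and Bint: "\<And>t. t \<ge> 0 \<Longrightarrow> (b has_integral B t) {0..t}"
    and bmono: "mono_on {0..} b"
    and bleft: "\<And>t. t > 0 \<Longrightarrow> continuous (at_left t) b"
    and lam: "\<And>t. t > 0 \<Longrightarrow> lam t > 0 \<and>
        ((\<lambda>\<tau>. B (gen_inv b (lam t * exp (\<tau>\<^sup>2 / 2))) * exp (- (\<tau>\<^sup>2 / 2)))
           has_integral sqrt (2 * pi)) {0..t}"
  shows "(\<beta> < 2 \<longrightarrow> ((\<lambda>t. lam t / (c_beta \<beta> * t powr (1 - 2 / \<beta>))) \<longlongrightarrow> 1) at_top)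
       \<and> (\<beta> = 2 \<longrightarrow> ((\<lambda>t. lam t * ln t / c_beta 2) \<longlongrightarrow> 1) at_top)"
proof -
  interpret exp_young_normalization \<beta> N t0 B b lam
    by unfold_locales (fact beta N t0 young Bexp Bint bmono bleft lam)+
  show ?thesis using lam_asymp_subcritical lam_asymp_critical by blast
qed

end
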